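(* If $\oplus$ is the drastic maximum $T_d'$ and $\otimes$ is a $T$-norm with no zero divisors, then $(\otimes,\oplus)$ satisfies the rearrangement inequality. If $\otimes$ is the drastic minimum $T_d$ and $\oplus$ is a $T$-conorm such that the $T$-norm $\Phi(\oplus)(x,y)=1-((1-x)\oplus(1-y))$ has no zero divisors, then $(\otimes,\oplus)$ satisfies the dual rearrangement inequality.
   Context: A uninorm is a function $\otimes:[0,1]^2\to[0,1]$ that is commutative, associative, monotonic ($x\leq y$ implies $x\otimes z\leq y\otimes z$), and has an identity element; a $T$-norm is a uninorm with identity $1$, a $T$-conorm one with identity $0$. For a $T$-norm $f$, a number $0<x<1$ is a zero divisor if there is $0<y<1$ with $f(x,y)=0$. The drastic minimum is $T_d(x,y)=\min(x,y)$ if $\max(x,y)=1$ and $0$ otherwise; the drastic maximum is $T_d'(x,y)=\max(x,y)$ if $\min(x,y)=0$ and $1$ otherwise. $(\otimes,\oplus)$ satisfies the rearrangement inequality if for every $n\geq1$, all $0\leq x_1\leq\cdots\leq x_n\leq 1$, $0\leq y_1\leq\cdots\leq y_n\leq 1$ and every permutation $\sigma$ of $\{1,\dots,n\}$, $$(x_n\otimes y_1)\oplus\cdots\oplus(x_1\otimes y_n)\leq (x_{\sigma(1)}\otimes y_1)\oplus\cdots\oplus(x_{\sigma(n)}\otimes y_n)\leq (x_1\otimes y_1)\oplus\cdots\oplus(x_n\otimes y_n),$$ and the dual rearrangement inequality if for all such data $$(x_n\oplus y_1)\otimes\cdots\otimes(x_1\oplus y_n)\geq (x_{\sigma(1)}\oplus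 y_1)\otimes\cdots\otimes(x_{\sigma(n)}\oplus y_n)\geq (x_1\oplus y_1)\otimes\cdots\otimes(x_n\oplus y_n).$$ *)

theory Defs
  imports "HOL-Analysis.Analysis" "HOL-Combinatorics.Permutations"
begin


definition uninorm :: "(real \<Rightarrow> real \<Rightarrow> real) \<Rightarrow> bool" where
  "uninorm f \<longleftrightarrow>
     (\<forall>x\<in>{0..1}. \<forall>y\<in>{0..1}. f x y \<in> {0..1}) \<and>
     (\<forall>x\<in>{0..1}. \<forall>y\<in>{0..1}. f x y = f y x) \<and>
     (\<forall>x\<in>{0..1}. \<forall>y\<in>{0..1}. \<forall>z\<in>{0..1}. f (f x y) z = f x (f y z)) \<and>
     (\<forall>x\<in>{0..1}. \<forall>y\<in>{0..1}. \<forall>z\<in>{0..1}. x \<le> y \<longrightarrow> f x z \<le> f y z) \<and>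
     (\<exists>e\<in>{0..1}. \<forall>x\<in>{0..1}. f e x = x)"

definition tnorm :: "(real \<Rightarrow> real \<Rightarrow> real) \<Rightarrow> bool" where
  "tnorm f \<longleftrightarrow> uninorm f \<and> (\<forall>x\<in>{0..1}. f 1 x = x)"

definition tconorm :: "(real \<Rightarrow> real \<Rightarrow> real) \<Rightarrow> bool" where
  "tconorm f \<longleftrightarrow> uninorm f \<and> (\<forall>x\<in>{0..1}. f 0 x = x)"

definition no_zero_divisors :: "(real \<Rightarrow> real \<Rightarrow> real) \<Rightarrow> bool" where
  "no_zero_divisors f \<longleftrightarrow> \<not> (\<exists>x y. 0 < x \<and> x < 1 \<and> 0 < y \<and> y < 1 \<and> f x y = 0)"

definition drastic_min :: "real \<Rightarrow> real \<Rightarrow> real" where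
  "drastic_min x y = (if max x y = 1 then min x y else 0)"

definition drastic_max :: "real \<Rightarrow> real \<Rightarrow> real" where
  "drastic_max x y = (if min x y = 0 then max x y else 1)"

definition dual_op :: "(real \<Rightarrow> real \<Rightarrow> real) \<Rightarrow> real \<Rightarrow> real \<Rightarrow> real" where
  "dual_op g x y = 1 - g (1 - x) (1 - y)"

fun opfold :: "(real \<Rightarrow> real \<Rightarrow> real) \<Rightarrow> (nat \<Rightarrow> real) \<Rightarrow> nat \<Rightarrow> real" where
  "opfold f g 0 = undefined"
| "opfold f g (Suc 0) = g 1"
| "opfold f g (Suc (Suc n)) = f (opfold f g (Suc n)) (g (Suc (Suc n)))"

definition rearrangement_ineq ::
  "(real \<Rightarrow> real \<Rightarrow> real) \<Rightarrow> (real \<Rightarrow> real \<Rightarrow> real) \<Rightarrow> bool" where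
  "rearrangement_ineq otimes oplus \<longleftrightarrow>
     (\<forall>n::nat. \<forall>x y :: nat \<Rightarrow> real. \<forall>\<sigma>.
        n \<ge> 1 \<longrightarrow>
        (\<forall>i\<in>{1..n}. 0 \<le> x i \<and> x i \<le> 1 \<and> 0 \<le> y i \<and> y i \<le> 1) \<longrightarrow>
        (\<forall>i j. 1 \<le> i \<longrightarrow> i \<le> j \<longrightarrow> j \<le> n \<longrightarrow> x i \<le> x j \<and> y i \<le> y j) \<longrightarrow>
        \<sigma> permutes {1..n} \<longrightarrow>
        opfold oplus (\<lambda>i. otimes (x (n + 1 - i)) (y i)) n
          \<le> opfold oplus (\<lambda>i. otimes (x (\<sigma> i)) (y i)) n \<and>
        opfold oplus (\<lambda>i. otimes (x (\<sigma> i)) (y i)) n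
          \<le> opfold oplus (\<lambda>i. otimes (x i) (y i)) n)"

definition dual_rearrangement_ineq ::
  "(real \<Rightarrow> real \<Rightarrow> real) \<Rightarrow> (real \<Rightarrow> real \<Rightarrow> real) \<Rightarrow> bool" where
  "dual_rearrangement_ineq otimes oplus \<longleftrightarrow>
     (\<forall>n::nat. \<forall>x y :: nat \<Rightarrow> real. \<forall>\<sigma>.
        n \<ge> 1 \<longrightarrow>
        (\<forall>i\<in>{1..n}. 0 \<le> x i \<and> x i \<le> 1 \<and> 0 \<le> y i \<and> y i \<le> 1) \<longrightarrow>
        (\<forall>i j. 1 \<le> i \<longrightarrow> i \<le> j \<longrightarrow> j \<le> n \<longrightarrow> x i \<le> x j \<and> y i \<le> y j) \<longrightarrow>
        \<sigma> permutes {1..n} \<longrightarrow>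
        opfold otimes (\<lambda>i. oplus (x (n + 1 - i)) (y i)) n
          \<ge> opfold otimes (\<lambda>i. oplus (x (\<sigma> i)) (y i)) n \<and>
        opfold otimes (\<lambda>i. oplus (x (\<sigma> i)) (y i)) n
          \<ge> opfold otimes (\<lambda>i. oplus (x i) (y i)) n)"

end

theory Submission
  imports Defs
begin

(*
  An iterated drastic maximum of values in [0,1] is 0 if all of them vanish, the only non-zero
  value if there is exactly one, and 1 otherwise. Without zero divisors T (x (sigma i)) (y i)
  vanishes iff one of its arguments does, so what matters is the set of indices i with
  x (sigma i) > 0 and y i > 0. As {x > 0} and {y > 0} are final segments of {1..n}, this set
  is largest for the identity, where it is their intersection, and smallest for the reversal,
  where (if non-empty) it has |x > 0| + |y > 0| - n elements, a lower bound for every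
  permutation. If it is a singleton, the surviving term is the largest possible one for the
  identity (index n) and the smallest possible one for the reversal.

  The dual inequality reduces to the first one: a := 1 - a exchanges the drastic minimum and
  maximum and turns the T-conorm S into the T-norm dual_op S, and reversing the index order
  makes the complemented sequences increasing again.
*)

lemma finite_set_cases_by_card:
  assumes "finite S"
  obtains "S = {}" | k where "S = {k}" | "2 \<le> card S"
proof -
  have "card S = 0 \<or> card S = 1 \<or> 2 \<le> card S"
    by linarith
  then show ?thesis
    using assms that by (auto simp: card_1_singleton_iff)
qed

definition drastic_sum :: "('a \<Rightarrow> real) \<Rightarrow> 'a set \<Rightarrow> real" where
  "drastic_sum g I = (if 2 \<le> card (support_on I g) then 1 else supp_sum g I)"

lemma drastic_sum_cong:
  assumes "\<And>i. i \<in> I \<Longrightarrow> g i = h i"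
  shows "drastic_sum g I = drastic_sum h I"
proof -
  have supp: "support_on I g = support_on I h"
    using assms by (auto simp: support_on_def)
  have "supp_sum g I = supp_sum h I"
    unfolding supp_sum_def supp by (rule sum.cong) (auto simp: assms support_on_def)
  then show ?thesis
    by (simp add: drastic_sum_def supp)
qed

lemma drastic_sum_reindex:
  assumes "bij_betw p I I"
  shows "drastic_sum (g \<circ> p) I = drastic_sum g I"
proof -
  let ?S = "support_on I (g \<circ> p)"
  have inj: "inj_on p ?S"
    using assms by (auto simp: bij_betw_def support_on_def intro: inj_on_subset)
  have "support_on (p ` I) g = p ` ?S"
    unfolding support_on_def by auto
  then have supp: "support_on I g = p ` ?S"
    using assms by (simp add: bij_betw_def)
  have "card (support_on I g) = card ?S"
    unfolding supp by (rule card_image[OF inj])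
  moreover have "supp_sum g I = supp_sum (g \<circ> p) I"
    unfolding supp_sum_def supp by (rule sum.reindex[OF inj])
  ultimately show ?thesis
    by (simp add: drastic_sum_def)
qed

lemma drastic_sum_nonneg:
  assumes "\<And>i. i \<in> I \<Longrightarrow> 0 \<le> g i"
  shows "0 \<le> drastic_sum g I"
  using assms by (auto simp: drastic_sum_def supp_sum_def support_on_def intro: sum_nonneg)

lemma drastic_max_nonneg:
  "0 \<le> a \<Longrightarrow> 0 \<le> b \<Longrightarrow> drastic_max a b = (if a = 0 then b else if b = 0 then a else 1)"
  by (auto simp: drastic_max_def min_def max_def)

lemma drastic_sum_insert:
  assumes "finite I" "i \<notin> I" "\<And>j. j \<in> insert i I \<Longrightarrow> 0 \<le> g j"
  shows "drastic_sum g (insert i I) = drastic_max (drastic_sum g I) (g i)"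
proof -
  let ?S = "support_on I g"
  have fin: "finite ?S" using assms(1) by blast
  have S: "i \<notin> ?S" using assms(2) by (simp add: support_on_def)
  have nonneg: "0 \<le> drastic_sum g I" using assms(3) by (intro drastic_sum_nonneg) auto
  show ?thesis
  proof (cases "g i = 0")
    case True
    then show ?thesis
      using nonneg fin by (simp add: drastic_sum_def drastic_max_nonneg supp_sum_def)
  next
    case False
    have gi: "0 \<le> g i" using assms(3) by simp
    show ?thesis
    proof (cases rule: finite_set_cases_by_card[OF fin])
      case 1
      then show ?thesis using False gi by (simp add: drastic_sum_def drastic_max_nonneg supp_sum_def)
    next
      case (2 k)
      then have "g k \<noteq> 0" "0 \<le> g k" using assms(3) by (auto simp: support_on_def)
      then show ?thesis using 2 S False gi by (simp add: drastic_sum_def drastic_max_nonneg supp_sum_def)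
    next
      case 3
      then show ?thesis using S fin False gi by (simp add: drastic_sum_def drastic_max_nonneg)
    qed
  qed
qed

lemma opfold_drastic_max:
  assumes "1 \<le> n" "\<And>i. i \<in> {1..n} \<Longrightarrow> 0 \<le> g i"
  shows "opfold drastic_max g n = drastic_sum g {1..n}"
  using assms
proof (induction n rule: nat_induct_at_least)
  case base
  then show ?case by (simp add: drastic_sum_def supp_sum_def)
next
  case (Suc n)
  have IH: "opfold drastic_max g n = drastic_sum g {1..n}"
    using Suc.prems by (intro Suc.IH) auto
  obtain m where "n = Suc m"
    using Suc.hyps by (cases n) auto
  then have "opfold drastic_max g (Suc n) = drastic_max (opfold drastic_max g n) (g (Suc n))"
    by simp
  also have "\<dots> = drastic_sum g (insert (Suc n) {1..n})"
    unfolding IH using Suc.prems by (intro drastic_sum_insert[symmetric]) auto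
  also have "insert (Suc n) {1..n} = {1..Suc n}"
    by auto
  finally show ?case .
qed

lemma drastic_sum_mono:
  assumes "finite I" "\<And>i. i \<in> I \<Longrightarrow> g i \<le> 1" "\<And>i. i \<in> I \<Longrightarrow> 0 \<le> h i"
    and card: "card (support_on I g) \<le> card (support_on I h)"
    and single: "\<And>k j. support_on I g = {k} \<Longrightarrow> support_on I h = {j} \<Longrightarrow> g k \<le> h j"
  shows "drastic_sum g I \<le> drastic_sum h I"
proof -
  have fin: "finite (support_on I g)" "finite (support_on I h)"
    using assms(1) by auto
  show ?thesis
  proof (cases rule: finite_set_cases_by_card[OF fin(2)])
    case 1
    then have "support_on I g = {}" using card fin(1) by simp
    with 1 show ?thesis by (simp add: drastic_sum_def supp_sum_def)
  next
    case (2 j)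
    then have "card (support_on I g) \<le> 1" using card by simp
    then have "support_on I g = {} \<or> (\<exists>k. support_on I g = {k})"
      by (cases rule: finite_set_cases_by_card[OF fin(1)]) auto
    moreover have "j \<in> I" using 2 by (auto simp: support_on_def)
    ultimately show ?thesis
      using 2 single assms(3) by (auto simp: drastic_sum_def supp_sum_def)
  next
    case 3
    have "g k \<le> 1" if "support_on I g = {k}" for k
      using that assms(2) by (auto simp: support_on_def)
    with 3 show ?thesis
      by (cases rule: finite_set_cases_by_card[OF fin(1)]) (auto simp: drastic_sum_def supp_sum_def)
  qed
qed

lemma opfold_dual_op:
  "1 \<le> n \<Longrightarrow> opfold (dual_op f) g n = 1 - opfold f (\<lambda>i. 1 - g i) n"
proof (induction n rule: nat_induct_at_least)
  case (Suc n)
  obtain m where m: "n = Suc m"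
    using Suc.hyps by (cases n) auto
  then have "opfold (dual_op f) g (Suc n) = dual_op f (opfold (dual_op f) g n) (g (Suc n))"
    by simp
  also have "\<dots> = 1 - opfold f (\<lambda>i. 1 - g i) (Suc n)"
    unfolding Suc.IH using m by (simp add: dual_op_def)
  finally show ?case .
qed simp

lemma drastic_min_eq_dual_op: "drastic_min = dual_op drastic_max"
  by (auto simp: fun_eq_iff drastic_min_def drastic_max_def dual_op_def min_def max_def)

lemma uninorm_mono:
  assumes "uninorm T" "a \<in> {0..1}" "b \<in> {0..1}" "a' \<in> {0..1}" "b' \<in> {0..1}" "a \<le> a'" "b \<le> b'"
  shows "T a b \<le> T a' b'"
proof -
  have comm: "\<And>u v. u \<in> {0..1} \<Longrightarrow> v \<in> {0..1} \<Longrightarrow> T u v = T v u"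
    and mono: "\<And>u v w. u \<in> {0..1} \<Longrightarrow> v \<in> {0..1} \<Longrightarrow> w \<in> {0..1} \<Longrightarrow> u \<le> v \<Longrightarrow> T u w \<le> T v w"
    using assms(1) unfolding uninorm_def by blast+
  have "T a b \<le> T a' b" using mono assms by blast
  also have "\<dots> = T b a'" using comm assms by blast
  also have "\<dots> \<le> T b' a'" using mono assms by blast
  also have "\<dots> = T a' b'" using comm assms by blast
  finally show ?thesis .
qed

lemma uninorm_range: "uninorm T \<Longrightarrow> a \<in> {0..1} \<Longrightarrow> b \<in> {0..1} \<Longrightarrow> T a b \<in> {0..1}"
  unfolding uninorm_def by blast

lemma tnorm_eq_0_iff:
  assumes "tnorm T" "no_zero_divisors T" "a \<in> {0..1}" "b \<in> {0..1}"
  shows "T a b = 0 \<longleftrightarrow> a = 0 \<or> b = 0"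
proof -
  have U: "uninorm T" and one: "\<And>u. u \<in> {0..1} \<Longrightarrow> T 1 u = u"
    using assms(1) by (auto simp: tnorm_def)
  have comm: "\<And>u v. u \<in> {0..1} \<Longrightarrow> v \<in> {0..1} \<Longrightarrow> T u v = T v u"
    using U unfolding uninorm_def by blast
  have zero: "T 0 u = 0" if "u \<in> {0..1}" for u
  proof -
    have "T 0 u \<le> T 0 1" using uninorm_mono[OF U, of 0 u 0 1] that by auto
    also have "\<dots> = 0" using comm[of 0 1] one[of 0] by simp
    finally show ?thesis using uninorm_range[OF U, of 0 u] that by simp
  qed
  show ?thesis
  proof
    assume "T a b = 0"
    show "a = 0 \<or> b = 0"
    proof (rule ccontr)
      assume "\<not> (a = 0 \<or> b = 0)"
      then have "0 < a" "0 < b" using assms(3,4) by auto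
      moreover have "a \<noteq> 1" using \<open>T a b = 0\<close> one[of b] \<open>0 < b\<close> assms(4) by auto
      moreover have "b \<noteq> 1" using \<open>T a b = 0\<close> one[of a] comm[of a 1] \<open>0 < a\<close> assms(3) by auto
      ultimately show False
        using \<open>T a b = 0\<close> assms(2,3,4) by (auto simp: no_zero_divisors_def)
    qed
  next
    assume "a = 0 \<or> b = 0"
    then show "T a b = 0" using zero[of a] zero[of b] comm[of a 0] assms(3,4) by auto
  qed
qed

lemma tnorm_dual_op:
  assumes "tconorm S"
  shows "tnorm (dual_op S)"
proof -
  have U: "uninorm S" and zero: "\<And>x. x \<in> {0..1} \<Longrightarrow> S 0 x = x"
    using assms by (auto simp: tconorm_def)
  have flip: "1 - x \<in> {0..1}" if "x \<in> {0..1}" for x :: real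
    using that by auto
  have range: "\<And>x y. x \<in> {0..1} \<Longrightarrow> y \<in> {0..1} \<Longrightarrow> S x y \<in> {0..1}"
    and comm: "\<And>x y. x \<in> {0..1} \<Longrightarrow> y \<in> {0..1} \<Longrightarrow> S x y = S y x"
    and assoc: "\<And>x y z. x \<in> {0..1} \<Longrightarrow> y \<in> {0..1} \<Longrightarrow> z \<in> {0..1} \<Longrightarrow>
      S (S x y) z = S x (S y z)"
    and mono: "\<And>x y z. x \<in> {0..1} \<Longrightarrow> y \<in> {0..1} \<Longrightarrow> z \<in> {0..1} \<Longrightarrow> x \<le> y \<Longrightarrow>
      S x z \<le> S y z"
    using U unfolding uninorm_def by blast+
  have one: "\<forall>x\<in>{0..1}. dual_op S 1 x = x"
    using zero flip by (simp add: dual_op_def)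
  have "uninorm (dual_op S)"
    unfolding uninorm_def
  proof (intro conjI)
    show "\<forall>x\<in>{0..1}. \<forall>y\<in>{0..1}. dual_op S x y \<in> {0..1}"
      using range flip by (fastforce simp: dual_op_def)
    show "\<forall>x\<in>{0..1}. \<forall>y\<in>{0..1}. dual_op S x y = dual_op S y x"
      using comm flip by (simp add: dual_op_def)
    show "\<forall>x\<in>{0..1}. \<forall>y\<in>{0..1}. \<forall>z\<in>{0..1}.
        dual_op S (dual_op S x y) z = dual_op S x (dual_op S y z)"
      using assoc flip by (simp add: dual_op_def)
    show "\<forall>x\<in>{0..1}. \<forall>y\<in>{0..1}. \<forall>z\<in>{0..1}. x \<le> y \<longrightarrow> dual_op S x z \<le> dual_op S y z"
      using mono flip by (simp add: dual_op_def)
    show "\<exists>e\<in>{0..1}. \<forall>x\<in>{0..1}. dual_op S e x = x"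
      using one by auto
  qed
  with one show ?thesis
    by (simp add: tnorm_def)
qed

lemma card_vimage_bij_betw:
  assumes "bij_betw f A B" "C \<subseteq> B"
  shows "card (f -` C \<inter> A) = card C"
proof -
  have "f ` (f -` C \<inter> A) = C"
    using assms by (auto simp: bij_betw_def)
  then have "bij_betw f (f -` C \<inter> A) C"
    using assms(1) by (auto intro: bij_betw_subset)
  then show ?thesis
    by (rule bij_betw_same_card)
qed

lemma card_Int_vimage_bij_betw:
  assumes "finite I" "bij_betw \<pi> I I" "P \<subseteq> I" "Q \<subseteq> I"
  shows "card Q + card P = card (Q \<union> (\<pi> -` P \<inter> I)) + card (Q \<inter> \<pi> -` P)"
proof -
  have "Q \<inter> (\<pi> -` P \<inter> I) = Q \<inter> \<pi> -` P"
    using assms(4) by auto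
  then show ?thesis
    using card_Un_Int[of Q "\<pi> -` P \<inter> I"] assms
    by (simp add: card_vimage_bij_betw finite_subset)
qed

lemma bij_betw_reverse: "bij_betw (\<lambda>i. n + 1 - i) {1..n} {1..n::nat}"
  by (rule bij_betw_byWitness[where f' = "\<lambda>i. n + 1 - i"]) auto

lemma bij_betw_reverse_conj:
  "bij_betw \<sigma> {1..n} {1..n} \<Longrightarrow> bij_betw (\<lambda>i. n + 1 - \<sigma> (n + 1 - i)) {1..n} {1..n::nat}"
  using bij_betw_trans[OF bij_betw_trans[OF bij_betw_reverse] bij_betw_reverse]
  by (simp add: comp_def)

lemma complement_reverse_range_mono:
  fixes x :: "nat \<Rightarrow> real"
  assumes "\<And>i. i \<in> {1..n} \<Longrightarrow> x i \<in> {0..1}" "mono_on {1..n} x"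
  shows "\<And>i. i \<in> {1..n} \<Longrightarrow> 1 - x (n + 1 - i) \<in> {0..1}"
    and "mono_on {1..n} (\<lambda>i. 1 - x (n + 1 - i))"
proof -
  fix i assume "i \<in> {1..n}"
  then have "n + 1 - i \<in> {1..n}"
    by auto
  with assms(1) show "1 - x (n + 1 - i) \<in> {0..1}"
    by auto
next
  show "mono_on {1..n} (\<lambda>i. 1 - x (n + 1 - i))"
  proof (rule mono_onI)
    fix i j assume "i \<in> {1..n}" "j \<in> {1..n}" "i \<le> j"
    then have "x (n + 1 - j) \<le> x (n + 1 - i)"
      by (intro mono_onD[OF assms(2)]) auto
    then show "1 - x (n + 1 - i) \<le> 1 - x (n + 1 - j)"
      by simp
  qed
qed

lemma mono_on_superlevel_sets_nested:
  fixes f g :: "'a::linorder \<Rightarrow> 'b::linorder"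
  assumes "mono_on I f" "mono_on I g"
  shows "{i\<in>I. a < f i} \<subseteq> {i\<in>I. b < g i} \<or> {i\<in>I. b < g i} \<subseteq> {i\<in>I. a < f i}"
proof (rule ccontr)
  assume "\<not> ?thesis"
  then obtain i j where i: "i \<in> I" "a < f i" "\<not> b < g i" and j: "j \<in> I" "b < g j" "\<not> a < f j"
    by auto
  show False
  proof (cases "i \<le> j")
    case True
    then show False using mono_onD[OF assms(1) i(1) j(1)] i j by auto
  next
    case False
    then have "j \<le> i" using linear by blast
    then show False using mono_onD[OF assms(2) j(1) i(1)] i j by auto
  qed
qed

lemma mono_antimono_superlevel_sets_cover:
  fixes f g :: "'a::linorder \<Rightarrow> 'b::linorder"
  assumes "mono_on I f" "antimono_on I g" "k \<in> I" "a < f k" "b < g k"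
  shows "{i\<in>I. a < f i} \<union> {i\<in>I. b < g i} = I"
proof -
  have "a < f i \<or> b < g i" if "i \<in> I" for i
  proof (cases "i \<le> k")
    case True
    then show ?thesis using monotone_onD[OF assms(2) that assms(3)] assms(5) by auto
  next
    case False
    then have "k \<le> i" using linear by blast
    then show ?thesis using mono_onD[OF assms(1) assms(3) that] assms(4) by auto
  qed
  then show ?thesis by auto
qed

context
  fixes T :: "real \<Rightarrow> real \<Rightarrow> real" and n :: nat and x y :: "nat \<Rightarrow> real"
  assumes tnorm: "tnorm T" and no_zero_divisors: "no_zero_divisors T"
    and x_range: "\<And>i. i \<in> {1..n} \<Longrightarrow> x i \<in> {0..1}"
    and y_range: "\<And>i. i \<in> {1..n} \<Longrightarrow> y i \<in> {0..1}"
    and x_mono: "mono_on {1..n} x" and y_mono: "mono_on {1..n} y"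
begin

lemma rearranged_term_range:
  assumes "\<pi> ` {1..n} \<subseteq> {1..n}" "i \<in> {1..n}"
  shows "T (x (\<pi> i)) (y i) \<in> {0..1}"
proof -
  have "\<pi> i \<in> {1..n}" using assms by blast
  moreover have "uninorm T" using tnorm by (simp add: tnorm_def)
  ultimately show ?thesis
    using uninorm_range x_range y_range assms(2) by blast
qed

lemma support_rearranged:
  assumes "\<pi> ` {1..n} \<subseteq> {1..n}"
  shows "support_on {1..n} (\<lambda>i. T (x (\<pi> i)) (y i))
    = {i\<in>{1..n}. 0 < y i} \<inter> \<pi> -` {i\<in>{1..n}. 0 < x i}"
proof -
  have "T (x (\<pi> i)) (y i) \<noteq> 0 \<longleftrightarrow> \<pi> i \<in> {1..n} \<and> 0 < x (\<pi> i) \<and> 0 < y i"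
    if "i \<in> {1..n}" for i
  proof -
    have "\<pi> i \<in> {1..n}" using assms that by blast
    then have "x (\<pi> i) \<in> {0..1}" "y i \<in> {0..1}" using x_range y_range that by auto
    with \<open>\<pi> i \<in> {1..n}\<close> show ?thesis
      using tnorm_eq_0_iff[OF tnorm no_zero_divisors] by auto
  qed
  then show ?thesis
    by (auto simp: support_on_def)
qed

lemma card_support_rearranged_le:
  assumes "bij_betw \<sigma> {1..n} {1..n}"
  shows "card (support_on {1..n} (\<lambda>i. T (x (\<sigma> i)) (y i)))
    \<le> card (support_on {1..n} (\<lambda>i. T (x i) (y i)))"
proof -
  let ?P = "{i\<in>{1..n}. 0 < x i}" and ?Q = "{i\<in>{1..n}. 0 < y i}"
  have "\<sigma> ` {1..n} \<subseteq> {1..n}"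
    using assms by (simp add: bij_betw_def)
  then have supp_\<sigma>: "support_on {1..n} (\<lambda>i. T (x (\<sigma> i)) (y i)) = ?Q \<inter> \<sigma> -` ?P"
    by (rule support_rearranged)
  have supp_id: "support_on {1..n} (\<lambda>i. T (x i) (y i)) = ?Q \<inter> ?P"
    using support_rearranged[of id] by simp
  have le_Q: "card (?Q \<inter> \<sigma> -` ?P) \<le> card ?Q"
    by (rule card_mono) auto
  have "card (?Q \<inter> \<sigma> -` ?P) \<le> card (\<sigma> -` ?P \<inter> {1..n})"
    by (rule card_mono) auto
  also have "\<dots> = card ?P"
    using assms by (intro card_vimage_bij_betw) auto
  finally have le_P: "card (?Q \<inter> \<sigma> -` ?P) \<le> card ?P" .
  from mono_on_superlevel_sets_nested[OF x_mono y_mono, of 0 0]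
  consider "?Q \<inter> ?P = ?P" | "?Q \<inter> ?P = ?Q"
    by blast
  then show ?thesis
    unfolding supp_\<sigma> supp_id using le_P le_Q by cases simp_all
qed

lemma rearranged_le_sorted:
  assumes "bij_betw \<sigma> {1..n} {1..n}"
  shows "drastic_sum (\<lambda>i. T (x (\<sigma> i)) (y i)) {1..n} \<le> drastic_sum (\<lambda>i. T (x i) (y i)) {1..n}"
proof (rule drastic_sum_mono)
  let ?P = "{i\<in>{1..n}. 0 < x i}" and ?Q = "{i\<in>{1..n}. 0 < y i}"
  have "\<sigma> ` {1..n} \<subseteq> {1..n}"
    using assms by (simp add: bij_betw_def)
  then have supp_\<sigma>: "support_on {1..n} (\<lambda>i. T (x (\<sigma> i)) (y i)) = ?Q \<inter> \<sigma> -` ?P"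
    by (rule support_rearranged)
  have supp_id: "support_on {1..n} (\<lambda>i. T (x i) (y i)) = ?Q \<inter> ?P"
    using support_rearranged[of id] by simp
  fix k j
  assume k: "support_on {1..n} (\<lambda>i. T (x i) (y i)) = {k}"
    and j: "support_on {1..n} (\<lambda>i. T (x (\<sigma> i)) (y i)) = {j}"
  \<comment> \<open>the only surviving sorted term is the one with the largest entries\<close>
  have "k \<in> ?Q \<inter> ?P" using k supp_id by auto
  then have "n \<in> ?Q \<inter> ?P"
    using mono_onD[OF x_mono, of k n] mono_onD[OF y_mono, of k n] by auto
  then have "k = n" using k supp_id by auto
  moreover have "j \<in> {1..n}" "\<sigma> j \<in> {1..n}" using j supp_\<sigma> by auto
  moreover have U: "uninorm T" using tnorm by (simp add: tnorm_def)
  ultimately show "T (x (\<sigma> j)) (y j) \<le> T (x k) (y k)"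
    using x_range y_range mono_onD[OF x_mono, of "\<sigma> j" n] mono_onD[OF y_mono, of j n]
    by (auto intro!: uninorm_mono[OF U])
qed (use card_support_rearranged_le[OF assms] rearranged_term_range[of \<sigma>]
      rearranged_term_range[of id] assms in \<open>auto simp: bij_betw_def\<close>)

lemma card_support_reversed_le:
  assumes "bij_betw \<sigma> {1..n} {1..n}"
  shows "card (support_on {1..n} (\<lambda>i. T (x (n + 1 - i)) (y i)))
    \<le> card (support_on {1..n} (\<lambda>i. T (x (\<sigma> i)) (y i)))"
proof -
  let ?P = "{i\<in>{1..n}. 0 < x i}" and ?Q = "{i\<in>{1..n}. 0 < y i}"
  let ?r = "\<lambda>i. n + 1 - i"
  have into: "\<sigma> ` {1..n} \<subseteq> {1..n}" "?r ` {1..n} \<subseteq> {1..n}"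
    using assms bij_betw_reverse[of n] by (simp_all add: bij_betw_def)
  have supp_\<sigma>: "support_on {1..n} (\<lambda>i. T (x (\<sigma> i)) (y i)) = ?Q \<inter> \<sigma> -` ?P"
    using support_rearranged[OF into(1)] .
  have supp_r: "support_on {1..n} (\<lambda>i. T (x (n + 1 - i)) (y i)) = ?Q \<inter> ?r -` ?P"
    using support_rearranged[OF into(2)] .
  show ?thesis
  proof (cases "?Q \<inter> ?r -` ?P = {}")
    case True
    then show ?thesis unfolding supp_r by simp
  next
    case False
    then obtain k where k: "k \<in> {1..n}" "0 < y k" "0 < x (n + 1 - k)"
      by auto
    have anti: "antimono_on {1..n} (\<lambda>i. x (n + 1 - i))"
    proof (rule monotone_onI)
      fix i j assume "i \<in> {1..n}" "j \<in> {1..n}" "i \<le> j"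
      then show "x (n + 1 - j) \<le> x (n + 1 - i)"
        by (intro mono_onD[OF x_mono]) auto
    qed
    have "?r -` ?P \<inter> {1..n} = {i\<in>{1..n}. 0 < x (n + 1 - i)}"
      by auto
    with mono_antimono_superlevel_sets_cover[OF y_mono anti k]
    have cover: "?Q \<union> (?r -` ?P \<inter> {1..n}) = {1..n}"
      by simp
    have subsets: "?P \<subseteq> {1..n}" "?Q \<subseteq> {1..n}"
      by auto
    have "card ?Q + card ?P = n + card (?Q \<inter> ?r -` ?P)"
      using card_Int_vimage_bij_betw[OF _ bij_betw_reverse subsets, unfolded cover] by simp
    moreover have "card ?Q + card ?P = card (?Q \<union> (\<sigma> -` ?P \<inter> {1..n})) + card (?Q \<inter> \<sigma> -` ?P)"
      using card_Int_vimage_bij_betw[OF _ assms subsets] by simp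
    moreover have "card (?Q \<union> (\<sigma> -` ?P \<inter> {1..n})) \<le> card {1..n}"
      by (rule card_mono) auto
    ultimately show ?thesis
      unfolding supp_r supp_\<sigma> card_atLeastAtMost by linarith
  qed
qed

lemma reversed_le_rearranged:
  assumes "bij_betw \<sigma> {1..n} {1..n}"
  shows "drastic_sum (\<lambda>i. T (x (n + 1 - i)) (y i)) {1..n}
    \<le> drastic_sum (\<lambda>i. T (x (\<sigma> i)) (y i)) {1..n}"
proof (rule drastic_sum_mono)
  let ?P = "{i\<in>{1..n}. 0 < x i}" and ?Q = "{i\<in>{1..n}. 0 < y i}"
  let ?r = "\<lambda>i. n + 1 - i"
  have into: "\<sigma> ` {1..n} \<subseteq> {1..n}" "?r ` {1..n} \<subseteq> {1..n}"
    using assms bij_betw_reverse[of n] by (simp_all add: bij_betw_def)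
  have supp_\<sigma>: "support_on {1..n} (\<lambda>i. T (x (\<sigma> i)) (y i)) = ?Q \<inter> \<sigma> -` ?P"
    using support_rearranged[OF into(1)] .
  have supp_r: "support_on {1..n} (\<lambda>i. T (x (n + 1 - i)) (y i)) = ?Q \<inter> ?r -` ?P"
    using support_rearranged[OF into(2)] .
  fix k j
  assume k: "support_on {1..n} (\<lambda>i. T (x (n + 1 - i)) (y i)) = {k}"
    and j: "support_on {1..n} (\<lambda>i. T (x (\<sigma> i)) (y i)) = {j}"
  then have kQ: "k \<in> {1..n}" "0 < y k" "0 < x (n + 1 - k)"
    and jQ: "j \<in> {1..n}" "0 < y j" "\<sigma> j \<in> {1..n}" "0 < x (\<sigma> j)"
    using supp_r supp_\<sigma> by auto
  \<comment> \<open>the only surviving reversed term is the one with the smallest positive entries\<close>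
  have "k \<le> j"
  proof (rule ccontr)
    assume "\<not> k \<le> j"
    then have "x (n + 1 - k) \<le> x (n + 1 - j)"
      using kQ jQ by (intro mono_onD[OF x_mono]) auto
    then have "j \<in> ?Q \<inter> ?r -` ?P"
      using jQ kQ by auto
    then show False
      using k supp_r \<open>\<not> k \<le> j\<close> by auto
  qed
  moreover have "n + 1 - k \<le> \<sigma> j"
  proof (rule ccontr)
    assume "\<not> n + 1 - k \<le> \<sigma> j"
    define p where "p = n + 1 - \<sigma> j"
    have p: "p \<in> {1..n}" "k < p" "n + 1 - p = \<sigma> j"
      using \<open>\<not> n + 1 - k \<le> \<sigma> j\<close> kQ jQ by (auto simp: p_def)
    then have "p \<in> ?Q \<inter> ?r -` ?P"
      using mono_onD[OF y_mono, of k p] kQ jQ by auto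
    then show False
      using k supp_r \<open>k < p\<close> by auto
  qed
  moreover have U: "uninorm T" using tnorm by (simp add: tnorm_def)
  ultimately show "T (x (n + 1 - k)) (y k) \<le> T (x (\<sigma> j)) (y j)"
    using x_range y_range mono_onD[OF x_mono, of "n + 1 - k" "\<sigma> j"]
      mono_onD[OF y_mono, of k j] kQ jQ
    by (auto intro!: uninorm_mono[OF U])
qed (use card_support_reversed_le[OF assms] rearranged_term_range[of \<sigma>]
      rearranged_term_range[of "\<lambda>i. n + 1 - i"] assms
      bij_betw_reverse[of n] in \<open>auto simp: bij_betw_def\<close>)

end

lemma rearrangement_ineq_drastic_max:
  assumes T: "tnorm T" "no_zero_divisors T"
  shows "rearrangement_ineq T drastic_max"
  unfolding rearrangement_ineq_def
proof (intro allI impI)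
  fix n :: nat and x y :: "nat \<Rightarrow> real" and \<sigma>
  assume n: "1 \<le> n" and range: "\<forall>i\<in>{1..n}. 0 \<le> x i \<and> x i \<le> 1 \<and> 0 \<le> y i \<and> y i \<le> 1"
    and sorted: "\<forall>i j. 1 \<le> i \<longrightarrow> i \<le> j \<longrightarrow> j \<le> n \<longrightarrow> x i \<le> x j \<and> y i \<le> y j"
    and \<sigma>: "\<sigma> permutes {1..n}"
  have x_range: "\<And>i. i \<in> {1..n} \<Longrightarrow> x i \<in> {0..1}"
    and y_range: "\<And>i. i \<in> {1..n} \<Longrightarrow> y i \<in> {0..1}"
    using range by auto
  have "mono_on {1..n} x" "mono_on {1..n} y"
    using sorted by (auto intro!: mono_onI)
  note setting = T x_range y_range this
  have sums: "opfold drastic_max (\<lambda>i. T (x (\<pi> i)) (y i)) n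
      = drastic_sum (\<lambda>i. T (x (\<pi> i)) (y i)) {1..n}" if "\<pi> ` {1..n} \<subseteq> {1..n}" for \<pi>
    by (rule opfold_drastic_max[OF n]) (use rearranged_term_range[OF setting that] in auto)
  have into: "\<sigma> ` {1..n} \<subseteq> {1..n}" "(\<lambda>i. n + 1 - i) ` {1..n} \<subseteq> {1..n}"
    "(\<lambda>i. i) ` {1..n} \<subseteq> {1..n}"
    using permutes_image[OF \<sigma>] by auto
  show "opfold drastic_max (\<lambda>i. T (x (n + 1 - i)) (y i)) n
      \<le> opfold drastic_max (\<lambda>i. T (x (\<sigma> i)) (y i)) n \<and>
    opfold drastic_max (\<lambda>i. T (x (\<sigma> i)) (y i)) n \<le> opfold drastic_max (\<lambda>i. T (x i) (y i)) n"
    unfolding sums[OF into(1)] sums[OF into(2)] sums[OF into(3)]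
    using reversed_le_rearranged[OF setting permutes_imp_bij[OF \<sigma>]]
      rearranged_le_sorted[OF setting permutes_imp_bij[OF \<sigma>]]
    by simp
qed

lemma opfold_drastic_min_dual_reversed:
  assumes "tconorm S" "1 \<le> n" "\<forall>i\<in>{1..n}. 0 \<le> x i \<and> x i \<le> 1 \<and> 0 \<le> y i \<and> y i \<le> 1"
    and \<pi>: "\<pi> ` {1..n} \<subseteq> {1..n}"
  shows "opfold drastic_min (\<lambda>i. S (x (\<pi> i)) (y i)) n
    = 1 - drastic_sum (\<lambda>i. dual_op S (1 - x (\<pi> (n + 1 - i))) (1 - y (n + 1 - i))) {1..n}"
proof -
  let ?g = "\<lambda>i. dual_op S (1 - x (\<pi> i)) (1 - y i)"
  have U: "uninorm (dual_op S)"
    using tnorm_dual_op[OF assms(1)] by (simp add: tnorm_def)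
  have "opfold drastic_min (\<lambda>i. S (x (\<pi> i)) (y i)) n = 1 - opfold drastic_max ?g n"
    using assms(2) by (simp add: drastic_min_eq_dual_op opfold_dual_op dual_op_def)
  also have "opfold drastic_max ?g n = drastic_sum ?g {1..n}"
  proof (rule opfold_drastic_max[OF assms(2)])
    fix i assume "i \<in> {1..n}"
    moreover have "\<pi> i \<in> {1..n}"
      using \<pi> \<open>i \<in> {1..n}\<close> by blast
    ultimately have "1 - x (\<pi> i) \<in> {0..1}" "1 - y i \<in> {0..1}"
      using assms(3) by auto
    then show "0 \<le> ?g i"
      using uninorm_range[OF U] by simp
  qed
  also have "\<dots> = drastic_sum (?g \<circ> (\<lambda>i. n + 1 - i)) {1..n}"
    using bij_betw_reverse by (rule drastic_sum_reindex[symmetric])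
  finally show ?thesis
    by (simp add: comp_def)
qed

lemma dual_rearrangement_ineq_drastic_min:
  assumes S: "tconorm S" "no_zero_divisors (dual_op S)"
  shows "dual_rearrangement_ineq drastic_min S"
  unfolding dual_rearrangement_ineq_def
proof (intro allI impI)
  fix n :: nat and x y :: "nat \<Rightarrow> real" and \<sigma>
  assume n: "1 \<le> n" and range: "\<forall>i\<in>{1..n}. 0 \<le> x i \<and> x i \<le> 1 \<and> 0 \<le> y i \<and> y i \<le> 1"
    and sorted: "\<forall>i j. 1 \<le> i \<longrightarrow> i \<le> j \<longrightarrow> j \<le> n \<longrightarrow> x i \<le> x j \<and> y i \<le> y j"
    and \<sigma>: "\<sigma> permutes {1..n}"
  have x_range: "\<And>i. i \<in> {1..n} \<Longrightarrow> x i \<in> {0..1}"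
    and y_range: "\<And>i. i \<in> {1..n} \<Longrightarrow> y i \<in> {0..1}"
    using range by auto
  have "mono_on {1..n} x" "mono_on {1..n} y"
    using sorted by (auto intro!: mono_onI)
  note x' = complement_reverse_range_mono[OF x_range this(1)]
    and y' = complement_reverse_range_mono[OF y_range this(2)]
  note setting = tnorm_dual_op[OF S(1)] S(2) x'(1) y'(1) x'(2) y'(2)
  note \<tau> = bij_betw_reverse_conj[OF permutes_imp_bij[OF \<sigma>]]
  have "drastic_sum (\<lambda>i. dual_op S (1 - x (n + 1 - (n + 1 - \<sigma> (n + 1 - i)))) (1 - y (n + 1 - i))) {1..n}
      = drastic_sum (\<lambda>i. dual_op S (1 - x (\<sigma> (n + 1 - i))) (1 - y (n + 1 - i))) {1..n}"
  proof (rule drastic_sum_cong)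
    fix i assume "i \<in> {1..n}"
    then have "n + 1 - i \<in> {1..n}"
      by auto
    then have "\<sigma> (n + 1 - i) \<in> {1..n}"
      using permutes_in_image[OF \<sigma>] by blast
    then show "dual_op S (1 - x (n + 1 - (n + 1 - \<sigma> (n + 1 - i)))) (1 - y (n + 1 - i))
        = dual_op S (1 - x (\<sigma> (n + 1 - i))) (1 - y (n + 1 - i))"
      by simp
  qed
  moreover have "\<sigma> ` {1..n} \<subseteq> {1..n}" "(\<lambda>i. n + 1 - i) ` {1..n} \<subseteq> {1..n}"
    "(\<lambda>i. i) ` {1..n} \<subseteq> {1..n}"
    using permutes_image[OF \<sigma>] by auto
  note sums = this[THEN opfold_drastic_min_dual_reversed[OF S(1) n range]]
  ultimately show "opfold drastic_min (\<lambda>i. S (x (n + 1 - i)) (y i)) n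
      \<ge> opfold drastic_min (\<lambda>i. S (x (\<sigma> i)) (y i)) n \<and>
    opfold drastic_min (\<lambda>i. S (x (\<sigma> i)) (y i)) n \<ge> opfold drastic_min (\<lambda>i. S (x i) (y i)) n"
    using sums reversed_le_rearranged[OF setting \<tau>] rearranged_le_sorted[OF setting \<tau>]
    by linarith
qed

theorem theorem12:
  fixes otimes oplus :: "real \<Rightarrow> real \<Rightarrow> real"
  shows "(tnorm otimes \<and> no_zero_divisors otimes \<longrightarrow>
            rearrangement_ineq otimes drastic_max)
       \<and> (tconorm oplus \<and> no_zero_divisors (dual_op oplus) \<longrightarrow>
            dual_rearrangement_ineq drastic_min oplus)"
  using rearrangement_ineq_drastic_max dual_rearrangement_ineq_drastic_min by blast

end
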